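(* Let $d=2$ and $f\in\mathcal{S}(\mathbb{R}^2)$ with $f(x_0)\ne0$ for some $x_0\in\mathbb{R}^2$. Let $(\xi_x)_{x\in\mathbb{Z}^2}$ be i.i.d. $\mathbb{R}^2$-valued random variables and $T_r^0=\sum_{x\in\mathbb{Z}^2} f((x+\xi_x)/r)$. Then there exist $C>0$, $\eta>0$, $r_0>0$ such that for all $r>r_0$, $$\operatorname{Var}[T_r^0]\ge C r^2\,\mathbb{P}[|\xi_0|\ge\eta r] + O(r^{-1}).$$
   Context: $\mathcal{S}(\mathbb{R}^2)$ is the Schwartz space; $O(r^{-1})$ denotes a quantity bounded in absolute value by a constant times $r^{-1}$ as $r\to\infty$. *)

theory Defs
  imports "HOL-Probability.Probability"
begin

definition dpart :: "2 \<Rightarrow> (real^2 \<Rightarrow> real) \<Rightarrow> (real^2 \<Rightarrow> real)" where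
  "dpart i g = (\<lambda>x. frechet_derivative g (at x) (axis i 1))"

fun dmulti :: "2 list \<Rightarrow> (real^2 \<Rightarrow> real) \<Rightarrow> (real^2 \<Rightarrow> real)" where
  "dmulti [] g = g"
| "dmulti (i # is) g = dpart i (dmulti is g)"

text \<open>Schwartz space S(R^2) (real-valued): all iterated partial derivatives exist
  (each is Frechet differentiable everywhere, hence f is C-infinity) and every
  derivative decays faster than any power of (1+|x|).\<close>
definition schwartz :: "(real^2 \<Rightarrow> real) \<Rightarrow> bool" where
  "schwartz f \<longleftrightarrow>
     (\<forall>is. \<forall>x. dmulti is f differentiable (at x)) \<and>
     (\<forall>is. \<forall>N::nat. \<exists>B. \<forall>x. (1 + norm x) ^ N * \<bar>dmulti is f x\<bar> \<le> B)"

definition latt :: "int \<times> int \<Rightarrow> real^2" where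
  "latt p = vector [real_of_int (fst p), real_of_int (snd p)]"

definition linstat :: "(real^2 \<Rightarrow> real) \<Rightarrow> (int \<times> int \<Rightarrow> 'a \<Rightarrow> real^2) \<Rightarrow> real \<Rightarrow> 'a \<Rightarrow> real" where
  "linstat f \<xi> r \<omega> = (\<Sum>\<^sub>\<infinity>p\<in>(UNIV :: (int \<times> int) set). f ((1 / r) *\<^sub>R (latt p + \<xi> p \<omega>)))"

text \<open>Variance with values in the extended reals (may be +infinity):
  E[(X - E X)^2] as a nonnegative integral.\<close>
definition evariance :: "'a measure \<Rightarrow> ('a \<Rightarrow> real) \<Rightarrow> ereal" where
  "evariance M X = enn2ereal (\<integral>\<^sup>+ \<omega>. ennreal ((X \<omega> - (\<integral>\<omega>'. X \<omega>' \<partial>M))\<^sup>2) \<partial>M)"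

end

theory Submission
  imports Defs
begin

text \<open>
  Pick a box \<open>S\<close> of about \<open>(\<delta> r)\<^sup>2\<close> lattice points \<open>x\<close> with \<open>x / r\<close> within \<open>\<delta>\<close> of \<open>x\<^sub>0\<close>.
  Resampling the displacements \<open>\<xi>\<^sub>x\<close>, \<open>x \<in> S\<close>, independently of all others (Fubini) shows
  that \<open>Var T\<^sub>r\<^sup>0\<close> is at least the sum of the variances of the finitely many independent,
  bounded terms \<open>f((x + \<xi>\<^sub>x)/r)\<close>, \<open>x \<in> S\<close>.  Such a term is within \<open>a = |f x\<^sub>0|/4\<close> of
  \<open>f x\<^sub>0\<close> when \<open>|\<xi>\<^sub>x| \<le> \<delta> r\<close>, an event of probability \<open>\<ge> 1/2\<close> for large \<open>r\<close>, and within \<open>a\<close>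
  of \<open>0\<close> when \<open>|\<xi>\<^sub>x| \<ge> \<eta> r\<close>, by the decay of \<open>f\<close>; hence its variance is at least
  \<open>a\<^sup>2 P[|\<xi>\<^sub>0| \<ge> \<eta> r] / 2\<close>.  Summing over \<open>S\<close> gives the bound with no error term, i.e.
  with \<open>K = 0\<close>.  Otherwise the rapid decay of \<open>f\<close> is only needed for the almost sure
  absolute convergence of the series defining \<open>T\<^sub>r\<^sup>0\<close>.
\<close>

section \<open>Unconditional sums\<close>

lemma summable_on_iff_summable_abs_reindex:
  fixes f :: "'i \<Rightarrow> real"
  assumes bij: "bij_betw e UNIV I"
  shows "f summable_on I \<longleftrightarrow> summable (\<lambda>n. \<bar>f (e n)\<bar>)"
proof -
  have "f summable_on I \<longleftrightarrow> (\<lambda>n. f (e n)) summable_on UNIV"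
    using summable_on_reindex_bij_betw[OF bij, of f] by simp
  also have "\<dots> \<longleftrightarrow> (\<lambda>n. \<bar>f (e n)\<bar>) summable_on UNIV"
    using summable_on_iff_abs_summable_on_real[of "\<lambda>n. f (e n)" UNIV] by simp
  also have "\<dots> \<longleftrightarrow> summable (\<lambda>n. \<bar>f (e n)\<bar>)"
    by (rule summable_on_UNIV_nonneg_real_iff) simp
  finally show ?thesis .
qed

lemma borel_measurable_infsum_countable:
  fixes \<phi> :: "'i \<Rightarrow> 'a \<Rightarrow> real"
  assumes I: "countable I" and [measurable]: "\<And>i. i \<in> I \<Longrightarrow> \<phi> i \<in> borel_measurable N"
  shows "(\<lambda>\<omega>. \<Sum>\<^sub>\<infinity>i\<in>I. \<phi> i \<omega>) \<in> borel_measurable N"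
proof (cases "finite I")
  case False
  define e where "e = from_nat_into I"
  have bij: "bij_betw e UNIV I"
    unfolding e_def using bij_betw_from_nat_into[OF I False] .
  then have [measurable]: "\<phi> (e n) \<in> borel_measurable N" for n
    by (auto simp: bij_betw_def)
  have infsum_eq: "(\<Sum>\<^sub>\<infinity>i\<in>I. \<phi> i \<omega>) =
      (if summable (\<lambda>n. \<bar>\<phi> (e n) \<omega>\<bar>) then \<Sum>n. \<phi> (e n) \<omega> else 0)" for \<omega>
  proof (cases "summable (\<lambda>n. \<bar>\<phi> (e n) \<omega>\<bar>)")
    case True
    have "(\<Sum>\<^sub>\<infinity>i\<in>I. \<phi> i \<omega>) = (\<Sum>\<^sub>\<infinity>n. \<phi> (e n) \<omega>)"
      using infsum_reindex_bij_betw[OF bij, of "\<lambda>i. \<phi> i \<omega>"] by simp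
    also have "\<dots> = (\<Sum>n. \<phi> (e n) \<omega>)"
      using True by (intro infsumI norm_summable_imp_has_sum summable_sums) (auto intro: summable_rabs_cancel)
    finally show ?thesis
      using True by simp
  qed (use summable_on_iff_summable_abs_reindex[OF bij, of "\<lambda>i. \<phi> i \<omega>"] infsum_not_exists in auto)
  have "summable (\<lambda>n. \<bar>\<phi> (e n) \<omega>\<bar>) \<longleftrightarrow> (\<Sum>n. ennreal \<bar>\<phi> (e n) \<omega>\<bar>) \<noteq> \<top>" for \<omega>
    by (metis abs_ge_zero ennreal_suminf_neq_top summable_suminf_not_top)
  then have [measurable]: "Measurable.pred N (\<lambda>\<omega>. summable (\<lambda>n. \<bar>\<phi> (e n) \<omega>\<bar>))"
    by (simp only:) measurable
  show ?thesis
    unfolding infsum_eq by measurable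
qed simp

lemma infsum_split_finite:
  fixes f :: "'i \<Rightarrow> real"
  assumes "finite S"
  shows "(\<Sum>\<^sub>\<infinity>i. f i) = (if f summable_on -S then sum f S + (\<Sum>\<^sub>\<infinity>i\<in>-S. f i) else 0)"
proof -
  have "f summable_on UNIV \<longleftrightarrow> f summable_on -S"
    using assms summable_on_subset_banach[of f UNIV "-S"] summable_on_Un_disjoint[of f S "-S"]
    by auto
  then show ?thesis
    using assms infsum_Un_disjoint[of f S "-S"] by (auto simp: infsum_not_exists)
qed

lemma infsum_override_finite:
  fixes g :: "'i \<Rightarrow> 'b \<Rightarrow> real"
  assumes S: "finite S" and summable: "(\<lambda>i. g i (x i)) summable_on UNIV"
  shows "(\<Sum>\<^sub>\<infinity>i. g i (if i \<in> S then y i else x i)) = (\<Sum>i\<in>S. g i (y i)) + (\<Sum>\<^sub>\<infinity>i\<in>-S. g i (x i))"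
proof -
  have "(\<lambda>i. g i (x i)) summable_on -S"
    using summable by (rule summable_on_subset_banach) simp
  then have "(\<lambda>i. g i (if i \<in> S then y i else x i)) summable_on -S"
    by (rule summable_on_cong[THEN iffD1, rotated]) auto
  moreover have "(\<Sum>\<^sub>\<infinity>i\<in>-S. g i (if i \<in> S then y i else x i)) = (\<Sum>\<^sub>\<infinity>i\<in>-S. g i (x i))"
    by (rule infsum_cong) simp
  ultimately show ?thesis
    by (simp add: infsum_split_finite[OF S])
qed

section \<open>Lattice sums\<close>

lemma sum_inverse_square_int_interval_le:
  "(\<Sum>j\<in>{-int N..int N}. 1 / (1 + \<bar>real_of_int j\<bar>)\<^sup>2) \<le> 3 - 2 / (real N + 1)"
proof (induction N)
  case (Suc N)
  have "{-int (Suc N)..int (Suc N)} = insert (-int (Suc N)) (insert (int (Suc N)) {-int N..int N})"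
    by auto
  then have "(\<Sum>j\<in>{-int (Suc N)..int (Suc N)}. 1 / (1 + \<bar>real_of_int j\<bar>)\<^sup>2)
      = 2 / (real N + 2)\<^sup>2 + (\<Sum>j\<in>{-int N..int N}. 1 / (1 + \<bar>real_of_int j\<bar>)\<^sup>2)"
    by (simp add: add.commute)
  also have "\<dots> \<le> 2 / (real N + 2)\<^sup>2 + (3 - 2 / (real N + 1))"
    using Suc by simp
  also have "\<dots> \<le> 3 - 2 / (real N + 2)"
  proof -
    have "2 / (real N + 2)\<^sup>2 \<le> 2 / ((real N + 1) * (real N + 2))"
      by (rule divide_left_mono) (auto simp: power2_eq_square intro!: mult_right_mono)
    also have "\<dots> = 2 / (real N + 1) - 2 / (real N + 2)"
      by (simp add: field_simps)
    finally show ?thesis by linarith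
  qed
  finally show ?case by (simp add: add.commute)
qed simp

lemma sum_inverse_square_int_le:
  assumes H: "finite H"
  shows "(\<Sum>j\<in>H. 1 / (1 + \<bar>real_of_int j\<bar>)\<^sup>2) \<le> 3"
proof -
  define N where "N = nat (Max (insert 0 (abs ` H)))"
  have "H \<subseteq> {-int N..int N}"
  proof
    fix j assume "j \<in> H"
    then have "\<bar>j\<bar> \<le> Max (insert 0 (abs ` H))" using H by (intro Max_ge) auto
    then show "j \<in> {-int N..int N}" unfolding N_def by auto
  qed
  then have "(\<Sum>j\<in>H. 1 / (1 + \<bar>real_of_int j\<bar>)\<^sup>2) \<le> (\<Sum>j\<in>{-int N..int N}. 1 / (1 + \<bar>real_of_int j\<bar>)\<^sup>2)"
    by (intro sum_mono2) auto
  also have "\<dots> \<le> 3"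
    using sum_inverse_square_int_interval_le[of N] divide_nonneg_nonneg[of 2 "real N + 1"] by linarith
  finally show ?thesis .
qed

lemma inverse_square_shifted_le:
  fixes r s :: real and k :: int
  assumes r: "r \<ge> 1"
  shows "1 / (1 + \<bar>real_of_int k + s\<bar> / r)\<^sup>2 \<le> 4 * r\<^sup>2 / (1 + \<bar>real_of_int (k + \<lfloor>s\<rfloor>)\<bar>)\<^sup>2"
proof -
  define j where "j = real_of_int (k + \<lfloor>s\<rfloor>)"
  define a where "a = \<bar>real_of_int k + s\<bar> / r"
  have a: "a \<ge> 0" unfolding a_def using r by simp
  have "\<bar>j\<bar> \<le> \<bar>real_of_int k + s\<bar> + 1"
    unfolding j_def by linarith
  moreover have "r * (1 + a) = r + \<bar>real_of_int k + s\<bar>"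
    unfolding a_def using r by (simp add: field_simps)
  ultimately have "1 + \<bar>j\<bar> \<le> r * (1 + a) + 1"
    using r by linarith
  also have "\<dots> \<le> 2 * r * (1 + a)"
    using \<open>r * (1 + a) = _\<close> r by linarith
  finally have "(1 + \<bar>j\<bar>)\<^sup>2 \<le> (2 * r * (1 + a))\<^sup>2"
    by (intro power_mono) auto
  then have "(1 + \<bar>j\<bar>)\<^sup>2 \<le> 4 * r\<^sup>2 * (1 + a)\<^sup>2"
    by (simp add: power_mult_distrib)
  then have "1 / (1 + a)\<^sup>2 \<le> 4 * r\<^sup>2 / (1 + \<bar>j\<bar>)\<^sup>2"
    using a by (simp add: field_simps)
  then show ?thesis unfolding a_def j_def .
qed

lemma sum_inverse_square_shifted_le:
  fixes r s :: real
  assumes r: "r \<ge> 1" and G: "finite G"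
  shows "(\<Sum>k\<in>G. 1 / (1 + \<bar>real_of_int k + s\<bar> / r)\<^sup>2) \<le> 12 * r\<^sup>2"
proof -
  have "(\<Sum>k\<in>G. 1 / (1 + \<bar>real_of_int k + s\<bar> / r)\<^sup>2)
      \<le> 4 * r\<^sup>2 * (\<Sum>k\<in>G. 1 / (1 + \<bar>real_of_int (k + \<lfloor>s\<rfloor>)\<bar>)\<^sup>2)"
    unfolding sum_distrib_left using inverse_square_shifted_le[OF r] by (intro sum_mono) simp
  also have "(\<Sum>k\<in>G. 1 / (1 + \<bar>real_of_int (k + \<lfloor>s\<rfloor>)\<bar>)\<^sup>2)
      = (\<Sum>j\<in>(\<lambda>k. k + \<lfloor>s\<rfloor>) ` G. 1 / (1 + \<bar>real_of_int j\<bar>)\<^sup>2)"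
    by (subst sum.reindex) (auto simp: inj_on_def)
  also have "\<dots> \<le> 3"
    using G by (intro sum_inverse_square_int_le) auto
  finally show ?thesis by (simp add: mult_left_mono)
qed

lemma latt_nth [simp]: "latt p $ 1 = real_of_int (fst p)" "latt p $ 2 = real_of_int (snd p)"
  by (simp_all add: latt_def)

lemma sum_abs_lattice_le:
  fixes f :: "real^2 \<Rightarrow> real"
  assumes decay: "\<And>z. (1 + norm z) ^ 4 * \<bar>f z\<bar> \<le> B" and r: "r \<ge> 1" and F: "finite F"
  shows "(\<Sum>p\<in>F. \<bar>f ((1 / r) *\<^sub>R (latt p + y))\<bar>) \<le> B * (12 * r\<^sup>2)\<^sup>2"
proof -
  define \<psi> where "\<psi> s = 1 / (1 + \<bar>s\<bar> / r)\<^sup>2" for s :: real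
  have B: "B \<ge> 0"
    using decay[of 0] abs_ge_zero[of "f 0"] by simp
  have \<psi>: "\<psi> s \<ge> 0" for s
    unfolding \<psi>_def by simp
  have f_le: "\<bar>f z\<bar> \<le> B / ((1 + \<bar>z $ 1\<bar>)\<^sup>2 * (1 + \<bar>z $ 2\<bar>)\<^sup>2)" for z
  proof -
    have "(1 + \<bar>z $ 1\<bar>)\<^sup>2 * (1 + \<bar>z $ 2\<bar>)\<^sup>2 \<le> (1 + norm z)\<^sup>2 * (1 + norm z)\<^sup>2"
      using component_le_norm_cart[of z 1] component_le_norm_cart[of z 2]
      by (intro mult_mono power_mono) auto
    also have "\<dots> = (1 + norm z) ^ 4"
      by simp
    finally have "(1 + \<bar>z $ 1\<bar>)\<^sup>2 * (1 + \<bar>z $ 2\<bar>)\<^sup>2 * \<bar>f z\<bar> \<le> B"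
      by (rule order_trans[OF mult_right_mono decay]) simp
    moreover have "(1 + \<bar>z $ 1\<bar>)\<^sup>2 * (1 + \<bar>z $ 2\<bar>)\<^sup>2 > 0"
      by simp
    ultimately show ?thesis
      by (simp add: le_divide_eq mult.commute)
  qed
  have term_le: "\<bar>f ((1 / r) *\<^sub>R (latt p + y))\<bar>
      \<le> B * (\<psi> (real_of_int (fst p) + y $ 1) * \<psi> (real_of_int (snd p) + y $ 2))" for p
    using f_le[of "(1 / r) *\<^sub>R (latt p + y)"] r by (simp add: \<psi>_def abs_mult)
  have "(\<Sum>p\<in>F. \<bar>f ((1 / r) *\<^sub>R (latt p + y))\<bar>)
      \<le> (\<Sum>p\<in>F. B * (\<psi> (real_of_int (fst p) + y $ 1) * \<psi> (real_of_int (snd p) + y $ 2)))"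
    by (intro sum_mono term_le)
  also have "\<dots> \<le> (\<Sum>p\<in>fst ` F \<times> snd ` F. B * (\<psi> (real_of_int (fst p) + y $ 1) * \<psi> (real_of_int (snd p) + y $ 2)))"
    using F B \<psi> by (intro sum_mono2) force+
  also have "\<dots> = B * (\<Sum>a\<in>fst ` F. \<Sum>b\<in>snd ` F. \<psi> (real_of_int a + y $ 1) * \<psi> (real_of_int b + y $ 2))"
    by (simp add: sum.cartesian_product split_def sum_distrib_left)
  also have "\<dots> = B * ((\<Sum>a\<in>fst ` F. \<psi> (real_of_int a + y $ 1)) * (\<Sum>b\<in>snd ` F. \<psi> (real_of_int b + y $ 2)))"
    by (simp add: sum_product)
  also have "\<dots> \<le> B * ((12 * r\<^sup>2) * (12 * r\<^sup>2))"
    unfolding \<psi>_def using F r B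
    by (intro mult_left_mono mult_mono sum_inverse_square_shifted_le sum_nonneg) auto
  finally show ?thesis by (simp add: power2_eq_square)
qed

section \<open>Lattice points near a point\<close>

lemma card_int_interval_ge:
  fixes c h :: real
  assumes "1 \<le> h"
  shows "h \<le> real (card {\<lceil>c - h\<rceil>..\<lfloor>c + h\<rfloor>})"
proof -
  have "h \<le> real_of_int (\<lfloor>c + h\<rfloor> + 1 - \<lceil>c - h\<rceil>)"
    using assms floor_correct[of "c + h"] ceiling_correct[of "c - h"] by linarith
  then show ?thesis
    by simp
qed

lemma int_interval_dist_le:
  fixes c h :: real
  assumes "k \<in> {\<lceil>c - h\<rceil>..\<lfloor>c + h\<rfloor>}"
  shows "\<bar>real_of_int k - c\<bar> \<le> h"
  using assms by (auto simp: abs_le_iff ceiling_le_iff le_floor_iff)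

lemma lattice_points_near:
  fixes x0 :: "real^2"
  assumes r: "r > 0" and \<delta>r: "2 \<le> \<delta> * r"
  obtains S where "finite S" "(\<delta> * r / 2)\<^sup>2 \<le> real (card S)"
    "\<And>p. p \<in> S \<Longrightarrow> norm ((1 / r) *\<^sub>R latt p - x0) \<le> \<delta>"
proof
  define I where "I k = {\<lceil>r * x0 $ k - \<delta> * r / 2\<rceil>..\<lfloor>r * x0 $ k + \<delta> * r / 2\<rfloor>}" for k
  show "finite (I 1 \<times> I 2)"
    by (simp add: I_def)
  have "\<delta> * r / 2 \<le> real (card (I k))" for k
    unfolding I_def using \<delta>r by (intro card_int_interval_ge) simp
  then have "(\<delta> * r / 2) * (\<delta> * r / 2) \<le> real (card (I 1)) * real (card (I 2))"
    using \<delta>r by (intro mult_mono) auto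
  then show "(\<delta> * r / 2)\<^sup>2 \<le> real (card (I 1 \<times> I 2))"
    by (simp add: card_cartesian_product power2_eq_square)
  fix p assume p: "p \<in> I 1 \<times> I 2"
  have scaled: "\<bar>t / r - c\<bar> \<le> \<delta> / 2" if "\<bar>t - r * c\<bar> \<le> \<delta> * r / 2" for t c
  proof -
    have "\<bar>t / r - c\<bar> = \<bar>t - r * c\<bar> / r"
      using r by (simp add: field_simps)
    with that r show ?thesis
      by (simp add: divide_le_eq)
  qed
  have "\<bar>real_of_int (fst p) - r * x0 $ 1\<bar> \<le> \<delta> * r / 2" "\<bar>real_of_int (snd p) - r * x0 $ 2\<bar> \<le> \<delta> * r / 2"
    using p unfolding I_def by (auto dest!: int_interval_dist_le)
  from this[THEN scaled] have "\<bar>((1 / r) *\<^sub>R latt p - x0) $ 1\<bar> \<le> \<delta> / 2" "\<bar>((1 / r) *\<^sub>R latt p - x0) $ 2\<bar> \<le> \<delta> / 2"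
    by simp_all
  then have "\<bar>((1 / r) *\<^sub>R latt p - x0) $ 1\<bar> + \<bar>((1 / r) *\<^sub>R latt p - x0) $ 2\<bar> \<le> \<delta>"
    by linarith
  then show "norm ((1 / r) *\<^sub>R latt p - x0) \<le> \<delta>"
    using norm_le_l1_cart[of "(1 / r) *\<^sub>R latt p - x0"] by (simp add: UNIV_2)
qed

section \<open>Independence and variance\<close>

lemma (in finite_measure) integrable_power_bounded:
  fixes f :: "'a \<Rightarrow> real"
  assumes "f \<in> borel_measurable M" and "\<And>\<omega>. \<omega> \<in> space M \<Longrightarrow> \<bar>f \<omega>\<bar> \<le> B"
  shows "integrable M (\<lambda>\<omega>. f \<omega> ^ k)"
proof (rule integrable_const_bound[where B="B ^ k"])
  show "AE \<omega> in M. norm (f \<omega> ^ k) \<le> B ^ k"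
    using assms(2) by (auto simp: power_abs intro!: power_mono)
qed (use assms(1) in simp)

lemma (in prob_space) prob_eq_of_distr_eq:
  assumes "distr M N X = distr M N Y" and "X \<in> measurable M N" "Y \<in> measurable M N" and "A \<in> sets N"
  shows "prob {\<omega> \<in> space M. X \<omega> \<in> A} = prob {\<omega> \<in> space M. Y \<omega> \<in> A}"
  using arg_cong[OF assms(1), of "\<lambda>D. measure D A"] assms(2-4)
  by (simp add: measure_distr vimage_def Int_def conj_commute)

lemma (in prob_space) AE_summable_on_identically_distributed:
  fixes g :: "'i::countable \<Rightarrow> 'b \<Rightarrow> real" and \<xi> :: "'i \<Rightarrow> 'a \<Rightarrow> 'b"
  assumes [measurable]: "\<And>i. g i \<in> borel_measurable N" "\<And>i. \<xi> i \<in> measurable M N"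
    and distr_eq: "\<And>i. distr M N (\<xi> i) = distr M N (\<xi> j)"
    and bounded: "\<And>F y. finite F \<Longrightarrow> (\<Sum>i\<in>F. \<bar>g i y\<bar>) \<le> K"
  shows "AE \<omega> in M. (\<lambda>i. g i (\<xi> i \<omega>)) summable_on UNIV"
proof (cases "finite (UNIV :: 'i set)")
  case False
  define e :: "nat \<Rightarrow> 'i" where "e = from_nat_into UNIV"
  have bij: "bij_betw e UNIV UNIV"
    unfolding e_def using False by (intro bij_betw_from_nat_into) auto
  have sum_le: "(\<Sum>n. ennreal \<bar>g (e n) y\<bar>) \<le> ennreal K" for y
  proof (rule suminf_le_const)
    fix n
    have "(\<Sum>k<n. \<bar>g (e k) y\<bar>) = (\<Sum>i\<in>e ` {..<n}. \<bar>g i y\<bar>)"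
      using bij by (subst sum.reindex) (auto simp: bij_betw_def inj_on_def)
    also have "\<dots> \<le> K"
      by (rule bounded) simp
    finally show "(\<Sum>k<n. ennreal \<bar>g (e k) y\<bar>) \<le> ennreal K"
      by (simp add: ennreal_leI)
  qed (rule summableI)
  have "(\<integral>\<^sup>+ \<omega>. (\<Sum>n. ennreal \<bar>g (e n) (\<xi> (e n) \<omega>)\<bar>) \<partial>M) = (\<Sum>n. \<integral>\<^sup>+ \<omega>. ennreal \<bar>g (e n) (\<xi> (e n) \<omega>)\<bar> \<partial>M)"
    by (rule nn_integral_suminf) measurable
  also have "\<dots> = (\<Sum>n. \<integral>\<^sup>+ \<omega>. ennreal \<bar>g (e n) (\<xi> j \<omega>)\<bar> \<partial>M)"
  proof (rule suminf_cong)
    fix n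
    have "(\<integral>\<^sup>+ \<omega>. ennreal \<bar>g (e n) (\<xi> (e n) \<omega>)\<bar> \<partial>M) = (\<integral>\<^sup>+ y. ennreal \<bar>g (e n) y\<bar> \<partial>distr M N (\<xi> (e n)))"
      by (subst nn_integral_distr) auto
    also have "\<dots> = (\<integral>\<^sup>+ \<omega>. ennreal \<bar>g (e n) (\<xi> j \<omega>)\<bar> \<partial>M)"
      unfolding distr_eq[of "e n"] by (subst nn_integral_distr) auto
    finally show "(\<integral>\<^sup>+ \<omega>. ennreal \<bar>g (e n) (\<xi> (e n) \<omega>)\<bar> \<partial>M) = (\<integral>\<^sup>+ \<omega>. ennreal \<bar>g (e n) (\<xi> j \<omega>)\<bar> \<partial>M)" .
  qed
  also have "\<dots> = (\<integral>\<^sup>+ \<omega>. (\<Sum>n. ennreal \<bar>g (e n) (\<xi> j \<omega>)\<bar>) \<partial>M)"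
    by (rule nn_integral_suminf[symmetric]) measurable
  also have "\<dots> \<le> (\<integral>\<^sup>+ \<omega>. ennreal K \<partial>M)"
    by (intro nn_integral_mono sum_le)
  also have "\<dots> < \<top>"
    by (simp add: emeasure_space_1)
  finally have "(\<integral>\<^sup>+ \<omega>. (\<Sum>n. ennreal \<bar>g (e n) (\<xi> (e n) \<omega>)\<bar>) \<partial>M) \<noteq> \<top>"
    by simp
  moreover have "(\<lambda>\<omega>. \<Sum>n. ennreal \<bar>g (e n) (\<xi> (e n) \<omega>)\<bar>) \<in> borel_measurable M"
    by measurable
  ultimately have "AE \<omega> in M. (\<Sum>n. ennreal \<bar>g (e n) (\<xi> (e n) \<omega>)\<bar>) \<noteq> \<top>"
    using nn_integral_PInf_AE[unfolded infinity_ennreal_def] by blast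
  then show ?thesis
  proof (rule eventually_mono)
    fix \<omega> assume "(\<Sum>n. ennreal \<bar>g (e n) (\<xi> (e n) \<omega>)\<bar>) \<noteq> \<top>"
    then have "summable (\<lambda>n. \<bar>g (e n) (\<xi> (e n) \<omega>)\<bar>)"
      by (intro summable_suminf_not_top) auto
    then show "(\<lambda>i. g i (\<xi> i \<omega>)) summable_on UNIV"
      using summable_on_iff_summable_abs_reindex[OF bij, of "\<lambda>i. g i (\<xi> i \<omega>)"] by simp
  qed
qed simp

lemma (in prob_space) nn_integral_indep_var:
  fixes X U :: "'a \<Rightarrow> 'b" and G :: "'b \<times> 'b \<Rightarrow> ennreal"
  assumes indep: "indep_var N X K U" and G: "G \<in> borel_measurable (N \<Otimes>\<^sub>M K)"
  shows "(\<integral>\<^sup>+ \<omega>. G (X \<omega>, U \<omega>) \<partial>M) = (\<integral>\<^sup>+ \<omega>. (\<integral>\<^sup>+ \<omega>'. G (X \<omega>, U \<omega>') \<partial>M) \<partial>M)"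
proof -
  have [measurable]: "X \<in> measurable M N" "U \<in> measurable M K"
    using indep_var_rv1[OF indep] indep_var_rv2[OF indep] .
  interpret U: prob_space "distr M K U"
    by (rule prob_space_distr) simp
  have sets_eq: "sets (distr M N X \<Otimes>\<^sub>M distr M K U) = sets (N \<Otimes>\<^sub>M K)"
    "sets (N \<Otimes>\<^sub>M distr M K U) = sets (N \<Otimes>\<^sub>M K)"
    by (intro sets_pair_measure_cong; simp)+
  have "(\<integral>\<^sup>+ \<omega>. G (X \<omega>, U \<omega>) \<partial>M) = integral\<^sup>N (distr M (N \<Otimes>\<^sub>M K) (\<lambda>\<omega>. (X \<omega>, U \<omega>))) G"
    using G by (subst nn_integral_distr) auto
  also have "\<dots> = integral\<^sup>N (distr M N X \<Otimes>\<^sub>M distr M K U) G"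
    using indep by (simp add: indep_var_distribution_eq)
  also have "\<dots> = (\<integral>\<^sup>+ x. \<integral>\<^sup>+ u. G (x, u) \<partial>distr M K U \<partial>distr M N X)"
    using G by (intro U.nn_integral_fst[symmetric]) (simp add: measurable_cong_sets[OF sets_eq(1)])
  also have "\<dots> = (\<integral>\<^sup>+ \<omega>. (\<integral>\<^sup>+ u. G (X \<omega>, u) \<partial>distr M K U) \<partial>M)"
    using G U.borel_measurable_nn_integral_fst[of G N]
    by (subst nn_integral_distr) (auto simp: measurable_cong_sets[OF sets_eq(2)])
  also have "\<dots> = (\<integral>\<^sup>+ \<omega>. (\<integral>\<^sup>+ \<omega>'. G (X \<omega>, U \<omega>') \<partial>M) \<partial>M)"
  proof (rule nn_integral_cong)
    fix \<omega> assume "\<omega> \<in> space M"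
    then have "(\<lambda>u. G (X \<omega>, u)) \<in> borel_measurable K"
      using G by (intro measurable_Pair_compose_split[of "\<lambda>x u. G (x, u)"]) (auto simp: measurable_space)
    then show "(\<integral>\<^sup>+ u. G (X \<omega>, u) \<partial>distr M K U) = (\<integral>\<^sup>+ \<omega>'. G (X \<omega>, U \<omega>') \<partial>M)"
      by (subst nn_integral_distr) auto
  qed
  finally show ?thesis .
qed

lemma (in prob_space) nn_integral_indep_resample:
  fixes \<xi> :: "'i \<Rightarrow> 'a \<Rightarrow> 'b" and F :: "('i \<Rightarrow> 'b) \<Rightarrow> ennreal"
  assumes indep: "indep_vars (\<lambda>_. N) \<xi> UNIV" and F: "F \<in> borel_measurable (PiM UNIV (\<lambda>_. N))"
  shows "(\<integral>\<^sup>+ \<omega>. F (\<lambda>i. \<xi> i \<omega>) \<partial>M)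
    = (\<integral>\<^sup>+ \<omega>. \<integral>\<^sup>+ \<omega>'. F (\<lambda>i. if i \<in> S then \<xi> i \<omega>' else \<xi> i \<omega>) \<partial>M \<partial>M)"
proof -
  define X\<^sub>S where "X\<^sub>S \<omega> = restrict (\<lambda>i. \<xi> i \<omega>) S" for \<omega>
  define X\<^sub>R where "X\<^sub>R \<omega> = restrict (\<lambda>i. \<xi> i \<omega>) (-S)" for \<omega>
  have merge_eq: "merge (-S) S (X\<^sub>R \<omega>, X\<^sub>S \<omega>') = (\<lambda>i. if i \<in> S then \<xi> i \<omega>' else \<xi> i \<omega>)" for \<omega> \<omega>'
    by (auto simp: merge_def X\<^sub>S_def X\<^sub>R_def)
  have "indep_var (PiM (-S) (\<lambda>_. N)) X\<^sub>R (PiM S (\<lambda>_. N)) X\<^sub>S"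
    using indep_vars_restrict[OF indep, where K="\<lambda>b. if b then -S else S" and L=UNIV]
    unfolding indep_var_def
    by (rule indep_vars_cong[THEN iffD1, rotated 3])
       (auto simp: X\<^sub>S_def X\<^sub>R_def disjoint_family_on_def split: bool.split)
  moreover have "(\<lambda>z. F (merge (-S) S z)) \<in> borel_measurable (PiM (-S) (\<lambda>_. N) \<Otimes>\<^sub>M PiM S (\<lambda>_. N))"
    using measurable_comp[OF measurable_merge[of "-S" S "\<lambda>_. N", unfolded Compl_partition2] F]
    by (simp add: comp_def)
  ultimately show ?thesis
    using nn_integral_indep_var[of _ X\<^sub>R _ X\<^sub>S "\<lambda>z. F (merge (-S) S z)"] by (simp add: merge_eq)
qed

lemma (in prob_space) variance_le_expectation_square_diff:
  fixes X :: "'a \<Rightarrow> real"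
  assumes [simp]: "integrable M X" "integrable M (\<lambda>\<omega>. (X \<omega>)\<^sup>2)"
  shows "variance X \<le> expectation (\<lambda>\<omega>. (X \<omega> - c)\<^sup>2)"
proof -
  have [simp]: "integrable M (\<lambda>\<omega>. (X \<omega> - c)\<^sup>2)"
    by (simp add: power2_diff)
  have "variance X = variance (\<lambda>\<omega>. X \<omega> - c)"
    by (simp add: prob_space)
  also have "\<dots> = expectation (\<lambda>\<omega>. (X \<omega> - c)\<^sup>2) - (expectation (\<lambda>\<omega>. X \<omega> - c))\<^sup>2"
    by (rule variance_eq) simp_all
  also have "\<dots> \<le> expectation (\<lambda>\<omega>. (X \<omega> - c)\<^sup>2)"
    by simp
  finally show ?thesis .
qed

lemma (in prob_space) variance_sum_indep:
  fixes X :: "'i \<Rightarrow> 'a \<Rightarrow> real"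
  assumes S: "finite S" and indep: "indep_vars (\<lambda>_. borel) X S"
    and square_integrable: "\<And>i. i \<in> S \<Longrightarrow> integrable M (\<lambda>\<omega>. (X i \<omega>)\<^sup>2)"
  shows "variance (\<lambda>\<omega>. \<Sum>i\<in>S. X i \<omega>) = (\<Sum>i\<in>S. variance (X i))"
proof -
  have X_measurable[measurable]: "X i \<in> borel_measurable M" if "i \<in> S" for i
    using indep that by (auto simp: indep_vars_def)
  have int_X: "integrable M (X i)" if "i \<in> S" for i
    by (rule square_integrable_imp_integrable[OF X_measurable square_integrable, OF that that])
  define Z where "Z i \<omega> = X i \<omega> - expectation (X i)" for i \<omega>
  have int_Z: "integrable M (Z i)" if "i \<in> S" for i
    using int_X[OF that] by (simp add: Z_def[abs_def])
  have indep_Z: "indep_vars (\<lambda>_. borel) Z {i, j}" if "i \<in> S" "j \<in> S" for i j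
    unfolding Z_def using that by (intro indep_vars_compose2[OF indep_vars_subset[OF indep]]) auto
  have int_ZZ: "integrable M (\<lambda>\<omega>. Z i \<omega> * Z j \<omega>)" if "i \<in> S" "j \<in> S" for i j
  proof (cases "i = j")
    case True
    then show ?thesis
      using that square_integrable int_X by (simp add: Z_def power2_eq_square[symmetric] power2_diff)
  next
    case False
    then show ?thesis
      using indep_vars_integrable[OF _ indep_Z[OF that]] that int_Z False by auto
  qed
  have cross: "expectation (\<lambda>\<omega>. Z i \<omega> * Z j \<omega>) = 0" if "i \<in> S" "j \<in> S" "i \<noteq> j" for i j
  proof -
    have "expectation (\<lambda>\<omega>. \<Prod>k\<in>{i, j}. Z k \<omega>) = (\<Prod>k\<in>{i, j}. expectation (Z k))"
      by (rule indep_vars_lebesgue_integral[OF _ indep_Z[OF that(1,2)]]) (use that int_Z in auto)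
    moreover have "expectation (Z i) = 0"
      using int_X[OF that(1)] by (simp add: Z_def[abs_def] prob_space)
    ultimately show ?thesis
      using that by simp
  qed
  have "(\<Sum>i\<in>S. X i \<omega>) - expectation (\<lambda>\<omega>. \<Sum>i\<in>S. X i \<omega>) = (\<Sum>i\<in>S. Z i \<omega>)" for \<omega>
    using int_X by (simp add: Z_def sum_subtractf)
  then have "variance (\<lambda>\<omega>. \<Sum>i\<in>S. X i \<omega>) = expectation (\<lambda>\<omega>. \<Sum>i\<in>S. \<Sum>j\<in>S. Z i \<omega> * Z j \<omega>)"
    by (simp add: power2_eq_square sum_product)
  also have "\<dots> = (\<Sum>i\<in>S. \<Sum>j\<in>S. expectation (\<lambda>\<omega>. Z i \<omega> * Z j \<omega>))"
    using int_ZZ by simp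
  also have "\<dots> = (\<Sum>i\<in>S. expectation (\<lambda>\<omega>. Z i \<omega> * Z i \<omega>))"
    using S cross by (intro sum.cong refl) (auto intro: sum.neutral simp: sum.remove)
  finally show ?thesis
    by (simp add: Z_def power2_eq_square)
qed

text \<open>If \<open>Y\<close> is within \<open>a\<close> of \<open>v\<close> on \<open>E\<^sub>1\<close> and within \<open>a\<close> of \<open>0\<close> on \<open>E\<^sub>2\<close>, then the mean of \<open>Y\<close> is
  at distance \<open>\<ge> 2a\<close> from \<open>v\<close> or from \<open>0\<close>, so \<open>\<bar>Y - E Y\<bar> \<ge> a\<close> on one of the two events.\<close>

lemma (in prob_space) variance_ge_two_events:
  fixes Y :: "'a \<Rightarrow> real"
  assumes [measurable]: "Y \<in> borel_measurable M"
    and bounded: "\<And>\<omega>. \<omega> \<in> space M \<Longrightarrow> \<bar>Y \<omega>\<bar> \<le> B"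
    and events: "E\<^sub>1 \<in> events" "E\<^sub>2 \<in> events"
    and near_v: "\<And>\<omega>. \<omega> \<in> E\<^sub>1 \<Longrightarrow> \<bar>Y \<omega> - v\<bar> \<le> a"
    and near_0: "\<And>\<omega>. \<omega> \<in> E\<^sub>2 \<Longrightarrow> \<bar>Y \<omega>\<bar> \<le> a"
    and a: "a > 0" and v: "4 * a \<le> \<bar>v\<bar>"
  shows "a\<^sup>2 * min (prob E\<^sub>1) (prob E\<^sub>2) \<le> variance Y"
proof -
  let ?far = "{\<omega> \<in> space M. a \<le> \<bar>Y \<omega> - expectation Y\<bar>}"
  have "integrable M (\<lambda>\<omega>. (Y \<omega>)\<^sup>2)"
    by (rule integrable_power_bounded[OF assms(1) bounded])
  then have Chebyshev: "prob ?far \<le> variance Y / a\<^sup>2"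
    using Chebyshev_inequality[of Y a] a by simp
  have "E\<^sub>1 \<subseteq> ?far \<or> E\<^sub>2 \<subseteq> ?far"
    using near_v near_0 v sets.sets_into_space[OF events(1)] sets.sets_into_space[OF events(2)]
    by (cases "2 * a \<le> \<bar>expectation Y - v\<bar>") (auto, fastforce+)
  moreover have "?far \<in> events"
    by measurable
  ultimately have "min (prob E\<^sub>1) (prob E\<^sub>2) \<le> prob ?far"
    by (auto simp: min_le_iff_disj intro: finite_measure_mono)
  then have "a\<^sup>2 * min (prob E\<^sub>1) (prob E\<^sub>2) \<le> a\<^sup>2 * prob ?far"
    by (rule mult_left_mono) simp
  also have "\<dots> \<le> variance Y"
    using Chebyshev a by (simp add: field_simps)
  finally show ?thesis .
qed

lemma (in prob_space) evariance_infsum_indep_ge: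
  fixes \<xi> :: "'i::countable \<Rightarrow> 'a \<Rightarrow> 'b" and \<phi> :: "'i \<Rightarrow> 'b \<Rightarrow> real"
  assumes indep: "indep_vars (\<lambda>_. N) \<xi> UNIV"
    and [measurable]: "\<And>i. \<phi> i \<in> borel_measurable N"
    and S: "finite S" and bounded: "\<And>i y. i \<in> S \<Longrightarrow> \<bar>\<phi> i y\<bar> \<le> B"
    and summable: "AE \<omega> in M. (\<lambda>i. \<phi> i (\<xi> i \<omega>)) summable_on UNIV"
  shows "ereal (\<Sum>i\<in>S. variance (\<lambda>\<omega>. \<phi> i (\<xi> i \<omega>)))
    \<le> evariance M (\<lambda>\<omega>. \<Sum>\<^sub>\<infinity>i. \<phi> i (\<xi> i \<omega>))"
proof -
  define m where "m = expectation (\<lambda>\<omega>. \<Sum>\<^sub>\<infinity>i. \<phi> i (\<xi> i \<omega>))"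
  define V where "V = (\<Sum>i\<in>S. variance (\<lambda>\<omega>. \<phi> i (\<xi> i \<omega>)))"
  let ?S_part = "\<lambda>\<omega>. \<Sum>i\<in>S. \<phi> i (\<xi> i \<omega>)"
  have [measurable]: "\<xi> i \<in> measurable M N" for i
    using indep by (auto simp: indep_vars_def)
  have "\<bar>?S_part \<omega>\<bar> \<le> card S * B" for \<omega>
    using bounded by (intro order_trans[OF sum_abs sum_bounded_above]) auto
  then have integrable_power: "integrable M (\<lambda>\<omega>. (?S_part \<omega>) ^ k)" for k
    by (intro integrable_power_bounded) simp_all
  have integrable_shifted_square: "integrable M (\<lambda>\<omega>. (?S_part \<omega> - c)\<^sup>2)" for c
    using integrable_power[of 1] integrable_power[of 2] by (simp add: power2_diff)
  have "(\<lambda>b. \<phi> i (b i)) \<in> borel_measurable (PiM UNIV (\<lambda>_. N))" for i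
    by measurable
  then have "(\<lambda>b. ennreal (((\<Sum>\<^sub>\<infinity>i. \<phi> i (b i)) - m)\<^sup>2)) \<in> borel_measurable (PiM UNIV (\<lambda>_. N))"
    using borel_measurable_infsum_countable[of UNIV] by measurable
  then have "evariance M (\<lambda>\<omega>. \<Sum>\<^sub>\<infinity>i. \<phi> i (\<xi> i \<omega>)) = (\<integral>\<^sup>+ \<omega>. \<integral>\<^sup>+ \<omega>'.
      ennreal (((\<Sum>\<^sub>\<infinity>i. \<phi> i (if i \<in> S then \<xi> i \<omega>' else \<xi> i \<omega>)) - m)\<^sup>2) \<partial>M \<partial>M)"
    unfolding evariance_def m_def[symmetric] by (subst nn_integral_indep_resample[OF indep]) auto
  also have "\<dots> \<ge> (\<integral>\<^sup>+ \<omega>. ennreal V \<partial>M)"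
  proof (rule nn_integral_mono_AE, use summable in \<open>rule eventually_mono\<close>)
    fix \<omega> assume summable: "(\<lambda>i. \<phi> i (\<xi> i \<omega>)) summable_on UNIV"
    define c where "c = m - (\<Sum>\<^sub>\<infinity>i\<in>-S. \<phi> i (\<xi> i \<omega>))"
    have resampled: "(\<Sum>\<^sub>\<infinity>i. \<phi> i (if i \<in> S then \<xi> i \<omega>' else \<xi> i \<omega>)) - m = ?S_part \<omega>' - c" for \<omega>'
      using infsum_override_finite[where g=\<phi> and x="\<lambda>i. \<xi> i \<omega>" and y="\<lambda>i. \<xi> i \<omega>'", OF S summable]
      by (simp add: c_def)
    have "V = variance ?S_part"
      unfolding V_def using bounded
      by (intro variance_sum_indep[symmetric] S indep_vars_compose2[OF indep_vars_subset[OF indep]]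
          integrable_power_bounded[where B=B]) auto
    also have "\<dots> \<le> expectation (\<lambda>\<omega>'. (?S_part \<omega>' - c)\<^sup>2)"
      using integrable_power[of 1] integrable_power[of 2]
      by (intro variance_le_expectation_square_diff) simp_all
    finally show "ennreal V \<le> (\<integral>\<^sup>+ \<omega>'. ennreal (((\<Sum>\<^sub>\<infinity>i. \<phi> i (if i \<in> S then \<xi> i \<omega>' else \<xi> i \<omega>)) - m)\<^sup>2) \<partial>M)"
      unfolding resampled
      by (subst nn_integral_eq_integral[OF integrable_shifted_square]) (auto intro: ennreal_leI)
  qed
  finally have "ennreal V \<le> e2ennreal (evariance M (\<lambda>\<omega>. \<Sum>\<^sub>\<infinity>i. \<phi> i (\<xi> i \<omega>)))"
    by (simp add: emeasure_space_1)
  moreover have "V \<ge> 0"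
    unfolding V_def by (intro sum_nonneg variance_positive)
  ultimately show ?thesis
    using less_eq_ennreal.rep_eq[of "ennreal V"]
    unfolding V_def[symmetric] evariance_def e2ennreal_enn2ereal by simp
qed

lemma (in prob_space) variance_bump_ge:
  fixes f :: "'v::real_normed_vector \<Rightarrow> real" and X :: "'a \<Rightarrow> 'v"
  assumes [measurable]: "X \<in> borel_measurable M" "f \<in> borel_measurable borel"
    and bounded: "\<And>y. \<bar>f y\<bar> \<le> B" and a: "0 < a" "4 * a \<le> \<bar>f x0\<bar>"
    and near: "\<And>y. norm (y - x0) \<le> 2 * \<delta> \<Longrightarrow> \<bar>f y - f x0\<bar> \<le> a"
    and far: "\<And>y. R \<le> norm y \<Longrightarrow> \<bar>f y\<bar> \<le> a"
    and u: "norm (u - x0) \<le> \<delta>" and r: "0 < r" and \<eta>: "R + norm x0 + \<delta> \<le> \<eta>"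
  shows "a\<^sup>2 * min (prob {\<omega> \<in> space M. norm (X \<omega>) \<le> \<delta> * r}) (prob {\<omega> \<in> space M. \<eta> * r \<le> norm (X \<omega>)})
    \<le> variance (\<lambda>\<omega>. f (u + (1 / r) *\<^sub>R X \<omega>))"
proof (rule variance_ge_two_events[where v="f x0"])
  fix \<omega> assume "\<omega> \<in> {\<omega> \<in> space M. norm (X \<omega>) \<le> \<delta> * r}"
  then have "norm ((1 / r) *\<^sub>R X \<omega>) \<le> \<delta>"
    using r by (simp add: divide_le_eq mult.commute)
  then have "norm (u + (1 / r) *\<^sub>R X \<omega> - x0) \<le> 2 * \<delta>"
    using u norm_triangle_ineq[of "u - x0" "(1 / r) *\<^sub>R X \<omega>"] by (simp add: algebra_simps)
  then show "\<bar>f (u + (1 / r) *\<^sub>R X \<omega>) - f x0\<bar> \<le> a"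
    by (rule near)
next
  fix \<omega> assume "\<omega> \<in> {\<omega> \<in> space M. \<eta> * r \<le> norm (X \<omega>)}"
  then have "\<eta> \<le> norm ((1 / r) *\<^sub>R X \<omega>)"
    using r by (simp add: le_divide_eq mult.commute)
  moreover have "norm u \<le> norm x0 + \<delta>"
    using u norm_triangle_ineq2[of u x0] by linarith
  ultimately have "R \<le> norm (u + (1 / r) *\<^sub>R X \<omega>)"
    using \<eta> norm_triangle_ineq2[of "(1 / r) *\<^sub>R X \<omega>" "- u"] by (simp add: algebra_simps)
  then show "\<bar>f (u + (1 / r) *\<^sub>R X \<omega>)\<bar> \<le> a"
    by (rule far)
qed (use bounded a in auto)

lemma (in prob_space) eventually_prob_norm_le:
  fixes X :: "'a \<Rightarrow> 'v::real_normed_vector"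
  assumes [measurable]: "X \<in> borel_measurable M" and "p < 1"
  shows "\<forall>\<^sub>F R in at_top. p < prob {\<omega> \<in> space M. norm (X \<omega>) \<le> R}"
proof -
  interpret D: real_distribution "distr M borel (\<lambda>\<omega>. norm (X \<omega>))"
    by (rule real_distribution_distr) simp
  have "cdf (distr M borel (\<lambda>\<omega>. norm (X \<omega>))) R = prob {\<omega> \<in> space M. norm (X \<omega>) \<le> R}" for R
    unfolding cdf_def by (subst measure_distr) (auto intro!: arg_cong[where f=prob])
  then show ?thesis
    using order_tendstoD(1)[OF D.cdf_lim_at_top_prob \<open>p < 1\<close>] by simp
qed

section \<open>Schwartz functions\<close>

lemma bounded_of_decay:
  fixes f :: "'v::real_normed_vector \<Rightarrow> real"
  assumes "\<And>z. (1 + norm z) ^ N * \<bar>f z\<bar> \<le> B"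
  shows "\<bar>f z\<bar> \<le> B"
proof -
  have "1 * \<bar>f z\<bar> \<le> (1 + norm z) ^ N * \<bar>f z\<bar>"
    by (intro mult_right_mono one_le_power) simp_all
  with assms[of z] show ?thesis
    by linarith
qed

lemma decay_imp_small_outside_ball:
  fixes f :: "'v::real_normed_vector \<Rightarrow> real"
  assumes decay: "\<And>z. (1 + norm z) * \<bar>f z\<bar> \<le> B" and a: "0 < a"
  obtains R where "\<And>y. R \<le> norm y \<Longrightarrow> \<bar>f y\<bar> \<le> a"
proof
  fix y :: 'v assume "\<bar>B\<bar> / a \<le> norm y"
  then have "(1 + norm y) * \<bar>f y\<bar> \<le> (1 + norm y) * a"
    using decay[of y] a by (simp add: divide_le_eq algebra_simps)
  then show "\<bar>f y\<bar> \<le> a"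
    by (simp add: add_pos_nonneg)
qed

lemma continuous_on_UNIV_near:
  fixes f :: "'v::real_normed_vector \<Rightarrow> real"
  assumes "continuous_on UNIV f" and "0 < a"
  obtains \<delta> where "0 < \<delta>" "\<And>y. norm (y - x) \<le> \<delta> \<Longrightarrow> \<bar>f y - f x\<bar> \<le> a"
proof -
  obtain d where d: "0 < d" "\<And>y. norm (y - x) < d \<Longrightarrow> \<bar>f y - f x\<bar> < a"
    using assms unfolding continuous_on_iff dist_norm real_norm_def by blast
  show ?thesis
  proof (rule that[of "d / 2"])
    show "\<bar>f y - f x\<bar> \<le> a" if "norm (y - x) \<le> d / 2" for y
      using d(2)[of y] that d(1) by linarith
  qed (use d in simp)
qed

lemma schwartz_continuous:
  assumes "schwartz f"
  shows "continuous_on UNIV f"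
proof -
  have "f differentiable (at x)" for x
    using assms dmulti.simps(1)[of f] unfolding schwartz_def by metis
  then show ?thesis
    by (intro continuous_at_imp_continuous_on ballI differentiable_imp_continuous_within)
qed

lemma schwartz_decay:
  assumes "schwartz f"
  obtains B where "\<And>z. (1 + norm z) ^ N * \<bar>f z\<bar> \<le> B"
  using assms dmulti.simps(1)[of f] unfolding schwartz_def by metis

lemma schwartz_near_far:
  fixes f :: "real^2 \<Rightarrow> real"
  assumes f: "schwartz f" and a: "0 < a"
  obtains \<delta> R where "0 < \<delta>" "\<And>y. norm (y - x0) \<le> 2 * \<delta> \<Longrightarrow> \<bar>f y - f x0\<bar> \<le> a"
    "\<And>y. R \<le> norm y \<Longrightarrow> \<bar>f y\<bar> \<le> a"
proof -
  obtain d where d: "0 < d" "\<And>y. norm (y - x0) \<le> d \<Longrightarrow> \<bar>f y - f x0\<bar> \<le> a"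
    using continuous_on_UNIV_near[OF schwartz_continuous[OF f] a] by blast
  obtain B where "\<And>z. (1 + norm z) ^ 1 * \<bar>f z\<bar> \<le> B"
    using schwartz_decay[OF f] by blast
  then have "\<And>z. (1 + norm z) * \<bar>f z\<bar> \<le> B"
    by simp
  then obtain R where "\<And>y. R \<le> norm y \<Longrightarrow> \<bar>f y\<bar> \<le> a"
    using decay_imp_small_outside_ball[OF _ a] by blast
  with d show ?thesis
    by (intro that[of "d / 2" R]) simp_all
qed

section \<open>The linear statistic\<close>

lemma (in prob_space) AE_summable_linstat:
  fixes f :: "real^2 \<Rightarrow> real" and \<xi> :: "int \<times> int \<Rightarrow> 'a \<Rightarrow> real^2"
  assumes \<xi>: "\<And>p. \<xi> p \<in> borel_measurable M" and [measurable]: "f \<in> borel_measurable borel"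
    and distr_eq: "\<And>p. distr M borel (\<xi> p) = distr M borel (\<xi> (0, 0))"
    and decay: "\<And>z. (1 + norm z) ^ 4 * \<bar>f z\<bar> \<le> B" and r: "1 \<le> r"
  shows "AE \<omega> in M. (\<lambda>p. f ((1 / r) *\<^sub>R (latt p + \<xi> p \<omega>))) summable_on UNIV"
proof (rule AE_summable_on_identically_distributed[where g="\<lambda>p y. f ((1 / r) *\<^sub>R (latt p + y))"
      and \<xi>=\<xi> and N=borel and j="(0, 0)"])
  show "(\<Sum>p\<in>F. \<bar>f ((1 / r) *\<^sub>R (latt p + y))\<bar>) \<le> B * (12 * r\<^sup>2)\<^sup>2" if "finite F" for F y
    using sum_abs_lattice_le[OF decay r that] .
  show "(\<lambda>y. f ((1 / r) *\<^sub>R (latt p + y))) \<in> borel_measurable borel" for p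
    by measurable
qed (fact \<xi> distr_eq)+

lemma (in prob_space) evariance_linstat_ge:
  fixes f :: "real^2 \<Rightarrow> real" and \<xi> :: "int \<times> int \<Rightarrow> 'a \<Rightarrow> real^2"
  assumes indep: "indep_vars (\<lambda>_. borel) \<xi> UNIV"
    and distr_eq: "\<And>p. distr M borel (\<xi> p) = distr M borel (\<xi> (0, 0))"
    and [measurable]: "f \<in> borel_measurable borel"
    and decay: "\<And>z. (1 + norm z) ^ 4 * \<bar>f z\<bar> \<le> B"
    and a: "0 < a" "4 * a \<le> \<bar>f x0\<bar>"
    and near: "\<And>y. norm (y - x0) \<le> 2 * \<delta> \<Longrightarrow> \<bar>f y - f x0\<bar> \<le> a"
    and far: "\<And>y. R \<le> norm y \<Longrightarrow> \<bar>f y\<bar> \<le> a"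
    and \<eta>: "R + norm x0 + \<delta> \<le> \<eta>"
    and r: "1 \<le> r" and \<delta>r: "2 \<le> \<delta> * r"
    and small: "1 / 2 \<le> prob {\<omega> \<in> space M. norm (\<xi> (0, 0) \<omega>) \<le> \<delta> * r}"
  shows "ereal (\<delta>\<^sup>2 * a\<^sup>2 / 8 * r\<^sup>2 * prob {\<omega> \<in> space M. \<eta> * r \<le> norm (\<xi> (0, 0) \<omega>)})
    \<le> evariance M (linstat f \<xi> r)"
proof -
  have \<xi>_measurable[measurable]: "\<xi> p \<in> borel_measurable M" for p
    using indep unfolding indep_vars_def by blast
  have bounded: "\<bar>f z\<bar> \<le> B" for z
    using decay by (rule bounded_of_decay)
  define p where "p = prob {\<omega> \<in> space M. \<eta> * r \<le> norm (\<xi> (0, 0) \<omega>)}"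
  have p: "0 \<le> p" "p \<le> 1"
    unfolding p_def by simp_all
  define \<phi> where "\<phi> q y = f ((1 / r) *\<^sub>R (latt q + y))" for q y
  have \<phi>_measurable[measurable]: "\<phi> q \<in> borel_measurable borel" for q
    unfolding \<phi>_def by measurable
  have same_prob: "prob {\<omega> \<in> space M. \<xi> q \<omega> \<in> A} = prob {\<omega> \<in> space M. \<xi> (0, 0) \<omega> \<in> A}"
    if "A \<in> sets borel" for q A
    using distr_eq that by (intro prob_eq_of_distr_eq) simp_all
  have summable: "AE \<omega> in M. (\<lambda>q. \<phi> q (\<xi> q \<omega>)) summable_on UNIV"
    unfolding \<phi>_def
    by (intro AE_summable_linstat[where \<xi>=\<xi> and f=f and B=B] \<xi>_measurable assms(3) distr_eq decay r)
  obtain S where S: "finite S" "(\<delta> * r / 2)\<^sup>2 \<le> real (card S)"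
    and S_near: "\<And>q. q \<in> S \<Longrightarrow> norm ((1 / r) *\<^sub>R latt q - x0) \<le> \<delta>"
    using lattice_points_near[of r \<delta> x0] r \<delta>r by auto
  have site: "a\<^sup>2 * (p / 2) \<le> variance (\<lambda>\<omega>. \<phi> q (\<xi> q \<omega>))" if "q \<in> S" for q
  proof -
    have "p / 2 \<le> min (prob {\<omega> \<in> space M. norm (\<xi> q \<omega>) \<le> \<delta> * r}) (prob {\<omega> \<in> space M. \<eta> * r \<le> norm (\<xi> q \<omega>)})"
      using same_prob[of "{y. norm y \<le> \<delta> * r}" q] same_prob[of "{y. \<eta> * r \<le> norm y}" q] small p
      by (simp add: p_def[symmetric])
    then have "a\<^sup>2 * (p / 2) \<le> a\<^sup>2 * min (prob {\<omega> \<in> space M. norm (\<xi> q \<omega>) \<le> \<delta> * r}) (prob {\<omega> \<in> space M. \<eta> * r \<le> norm (\<xi> q \<omega>)})"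
      by (rule mult_left_mono) simp
    also have "\<dots> \<le> variance (\<lambda>\<omega>. f ((1 / r) *\<^sub>R latt q + (1 / r) *\<^sub>R \<xi> q \<omega>))"
      using S_near[OF that] r bounded a near far \<eta>
      by (intro variance_bump_ge[where u="(1 / r) *\<^sub>R latt q" and X="\<xi> q" and R=R and B=B]) auto
    finally show ?thesis
      by (simp add: \<phi>_def scaleR_add_right)
  qed
  have "\<delta>\<^sup>2 * a\<^sup>2 / 8 * r\<^sup>2 * p = (\<delta> * r / 2)\<^sup>2 * (a\<^sup>2 * (p / 2))"
    by (simp add: power2_eq_square field_simps)
  also have "\<dots> \<le> (\<Sum>q\<in>S. a\<^sup>2 * (p / 2))"
    using S(2) by (simp add: p_def mult_right_mono)
  also have "\<dots> \<le> (\<Sum>q\<in>S. variance (\<lambda>\<omega>. \<phi> q (\<xi> q \<omega>)))"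
    by (intro sum_mono site)
  finally have "ereal (\<delta>\<^sup>2 * a\<^sup>2 / 8 * r\<^sup>2 * p) \<le> ereal (\<Sum>q\<in>S. variance (\<lambda>\<omega>. \<phi> q (\<xi> q \<omega>)))"
    by simp
  also have "\<dots> \<le> evariance M (\<lambda>\<omega>. \<Sum>\<^sub>\<infinity>q. \<phi> q (\<xi> q \<omega>))"
    using bounded by (intro evariance_infsum_indep_ge[OF indep \<phi>_measurable S(1) _ summable]) (simp add: \<phi>_def)
  also have "\<dots> = evariance M (linstat f \<xi> r)"
    by (simp add: \<phi>_def linstat_def[abs_def])
  finally show ?thesis
    unfolding p_def .
qed

theorem lemma3p6:
  fixes M :: "'a measure" and f :: "real^2 \<Rightarrow> real" and \<xi> :: "int \<times> int \<Rightarrow> 'a \<Rightarrow> real^2"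
    and x0 :: "real^2"
  assumes "prob_space M"
    and "schwartz f"
    and "f x0 \<noteq> 0"
    and "\<And>p. \<xi> p \<in> borel_measurable M"
    and "prob_space.indep_vars M (\<lambda>_. borel) \<xi> UNIV"
    and "\<And>p. distr M borel (\<xi> p) = distr M borel (\<xi> (0, 0))"
  shows "\<exists>C>0. \<exists>\<eta>>0. \<exists>r0>0. \<exists>K::real. \<forall>r>r0.
           ereal (C * r\<^sup>2 * measure M {\<omega> \<in> space M. norm (\<xi> (0, 0) \<omega>) \<ge> \<eta> * r} - K / r)
             \<le> evariance M (linstat f \<xi> r)"
proof -
  interpret prob_space M by fact
  have [measurable]: "f \<in> borel_measurable borel"
    using schwartz_continuous[OF assms(2)] by (rule borel_measurable_continuous_onI)
  obtain B where decay: "\<And>z. (1 + norm z) ^ 4 * \<bar>f z\<bar> \<le> B"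
    using schwartz_decay[OF assms(2), where N=4] by blast
  obtain a where a: "0 < a" "4 * a \<le> \<bar>f x0\<bar>"
    using assms(3) by (intro that[of "\<bar>f x0\<bar> / 4"]) simp_all
  obtain \<delta> R where \<delta>: "0 < \<delta>" and near: "\<And>y. norm (y - x0) \<le> 2 * \<delta> \<Longrightarrow> \<bar>f y - f x0\<bar> \<le> a"
    and far: "\<And>y. R \<le> norm y \<Longrightarrow> \<bar>f y\<bar> \<le> a"
    using schwartz_near_far[OF assms(2) a(1)] by blast
  obtain R\<^sub>\<xi> where small: "\<And>t. R\<^sub>\<xi> \<le> t \<Longrightarrow> 1 / 2 < prob {\<omega> \<in> space M. norm (\<xi> (0, 0) \<omega>) \<le> t}"
    using eventually_prob_norm_le[OF assms(4), of "1 / 2" "(0, 0)"] by (auto simp: eventually_at_top_linorder)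
  define C where "C = \<delta>\<^sup>2 * a\<^sup>2 / 8"
  define \<eta> where "\<eta> = \<bar>R\<bar> + norm x0 + \<delta>"
  define r0 where "r0 = max 1 (max (R\<^sub>\<xi> / \<delta>) (2 / \<delta>))"
  have "\<forall>r>r0. ereal (C * r\<^sup>2 * measure M {\<omega> \<in> space M. norm (\<xi> (0, 0) \<omega>) \<ge> \<eta> * r} - 0 / r)
      \<le> evariance M (linstat f \<xi> r)"
  proof (intro allI impI)
    fix r assume "r0 < r"
    then have r: "1 \<le> r" "2 \<le> \<delta> * r" "R\<^sub>\<xi> \<le> \<delta> * r"
      using \<delta> by (auto simp: r0_def field_simps)
    have "ereal (C * r\<^sup>2 * prob {\<omega> \<in> space M. \<eta> * r \<le> norm (\<xi> (0, 0) \<omega>)}) \<le> evariance M (linstat f \<xi> r)"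
      unfolding C_def using r small[of "\<delta> * r"]
      by (intro evariance_linstat_ge[OF assms(5,6) _ decay a near far]) (auto simp: \<eta>_def)
    then show "ereal (C * r\<^sup>2 * measure M {\<omega> \<in> space M. norm (\<xi> (0, 0) \<omega>) \<ge> \<eta> * r} - 0 / r)
      \<le> evariance M (linstat f \<xi> r)"
      by simp
  qed
  moreover have "0 < C" "0 < \<eta>" "0 < r0"
    using a \<delta> by (auto simp: C_def \<eta>_def r0_def add_nonneg_pos)
  ultimately show ?thesis
    by blast
qed

end
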